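(* If a finite simple graph $G$ contains an induced subgraph isomorphic to the path $P_k$ on $k$ vertices, where $k\ge 3$, then $\mathrm{mur}(G)\ge k-2$.
   Context: For a finite simple undirected graph $G$ on vertices $v_1,\dots,v_n$, let $A_G$ be its $(0,1)$-adjacency matrix, $D_G=\mathrm{diag}(d_1,\dots,d_n)$ with $d_i$ the degree of $v_i$, $I$ the $n\times n$ identity matrix and $J$ the $n\times n$ all-ones matrix. A universal adjacency matrix of $G$ is any matrix $\alpha A_G+\beta I+\gamma J+\delta D_G$ with real scalars $\alpha,\beta,\gamma,\delta$ and $\alpha\neq 0$. The minimum universal rank $\mathrm{mur}(G)$ is the minimum rank over all universal adjacency matrices of $G$. *)

theory Defs
  imports "HOL-Analysis.Analysis"
begin

definition simple_graph :: "('n::finite \<Rightarrow> 'n \<Rightarrow> bool) \<Rightarrow> bool" where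
  "simple_graph E \<longleftrightarrow> (\<forall>u v. E u v \<longrightarrow> E v u) \<and> (\<forall>v. \<not> E v v)"

definition adj_matrix :: "('n::finite \<Rightarrow> 'n \<Rightarrow> bool) \<Rightarrow> real^'n^'n" where
  "adj_matrix E = (\<chi> i j. if E i j then 1 else 0)"

definition degree :: "('n::finite \<Rightarrow> 'n \<Rightarrow> bool) \<Rightarrow> 'n \<Rightarrow> nat" where
  "degree E v = card {u. E v u}"

definition deg_matrix :: "('n::finite \<Rightarrow> 'n \<Rightarrow> bool) \<Rightarrow> real^'n^'n" where
  "deg_matrix E = (\<chi> i j. if i = j then real (degree E i) else 0)"

definition all_ones :: "real^'n^'n" where
  "all_ones = (\<chi> i j. 1)"

definition universal_adj_matrix ::
  "('n::finite \<Rightarrow> 'n \<Rightarrow> bool) \<Rightarrow> real \<Rightarrow> real \<Rightarrow> real \<Rightarrow> real \<Rightarrow> real^'n^'n" where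
  "universal_adj_matrix E \<alpha> \<beta> \<gamma> \<delta> =
     \<alpha> *\<^sub>R adj_matrix E + \<beta> *\<^sub>R mat 1 + \<gamma> *\<^sub>R all_ones + \<delta> *\<^sub>R deg_matrix E"

definition mur :: "('n::finite \<Rightarrow> 'n \<Rightarrow> bool) \<Rightarrow> nat" where
  "mur E = Inf {rank (universal_adj_matrix E \<alpha> \<beta> \<gamma> \<delta>) | \<alpha> \<beta> \<gamma> \<delta>. \<alpha> \<noteq> 0}"

definition has_induced_path :: "('n::finite \<Rightarrow> 'n \<Rightarrow> bool) \<Rightarrow> nat \<Rightarrow> bool" where
  "has_induced_path E k \<longleftrightarrow>
     (\<exists>f :: nat \<Rightarrow> 'n. inj_on f {0..<k} \<and>
        (\<forall>i<k. \<forall>j<k. E (f i) (f j) \<longleftrightarrow> (i + 1 = j \<or> j + 1 = i)))"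

end

theory Submission
  imports Defs
begin

text \<open>Let \<open>f 0, \<dots>, f (k - 1)\<close> be the vertices of the induced path, \<open>M\<close> a universal
  adjacency matrix with \<open>\<alpha> \<noteq> 0\<close> and \<open>e\<close> the standard basis. The vectors
  \<open>M (e (f i) - e (f (i + 1)))\<close>, \<open>i < k - 2\<close>, lie in the range of \<open>M\<close>; the \<open>J\<close>-term
  cancels in the difference. In row \<open>f (j + 2)\<close> the entry of the \<open>i\<close>-th of them is \<open>-\<alpha>\<close>
  for \<open>i = j\<close> and \<open>0\<close> for \<open>i < j\<close>, because on an induced path \<open>f (j + 2)\<close> is adjacent to
  neither \<open>f i\<close> nor \<open>f (i + 1)\<close> when \<open>i < j\<close>. This triangular pattern makes them
  independent, so \<open>rank M \<ge> k - 2\<close>.\<close>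

lemma independent_triangular_family:
  fixes w :: "nat \<Rightarrow> real^'n" and g :: "nat \<Rightarrow> 'n"
  assumes "\<And>i. i < m \<Longrightarrow> w i $ g i \<noteq> 0"
    and "\<And>i j. i < j \<Longrightarrow> j < m \<Longrightarrow> w i $ g j = 0"
  shows "independent (w ` {..<m}) \<and> card (w ` {..<m}) = m"
  using assms
proof (induction m)
  case 0
  then show ?case by (simp add: independent_empty)
next
  case (Suc m)
  have IH: "independent (w ` {..<m}) \<and> card (w ` {..<m}) = m"
    by (rule Suc.IH) (simp_all add: Suc.prems)
  have "span (w ` {..<m}) \<subseteq> {x. x $ g m = 0}"
  proof (rule span_minimal)
    show "w ` {..<m} \<subseteq> {x. x $ g m = 0}"
      using Suc.prems(2) by auto
  qed (rule subspace_special_hyperplane)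
  moreover have "w m $ g m \<noteq> 0"
    using Suc.prems(1) by simp
  ultimately have new: "w m \<notin> span (w ` {..<m})"
    by auto
  then have "w m \<notin> w ` {..<m}"
    by (meson span_base)
  then show ?case
    using IH new by (simp add: lessThan_Suc independent_insert)
qed

lemma rank_ge_triangular_family:
  fixes A :: "real^'n^'m" and w :: "nat \<Rightarrow> real^'m" and g :: "nat \<Rightarrow> 'm"
  assumes "\<And>i. i < r \<Longrightarrow> w i \<in> range ((*v) A)"
    and "\<And>i. i < r \<Longrightarrow> w i $ g i \<noteq> 0"
    and "\<And>i j. i < j \<Longrightarrow> j < r \<Longrightarrow> w i $ g j = 0"
  shows "r \<le> rank A"
proof -
  have "independent (w ` {..<r})" and card: "card (w ` {..<r}) = r"
    using independent_triangular_family[of r w g] assms(2,3) by auto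
  moreover have "w ` {..<r} \<subseteq> range ((*v) A)"
    using assms(1) by auto
  ultimately have "card (w ` {..<r}) \<le> dim (range ((*v) A))"
    by (intro independent_card_le_dim)
  then show ?thesis
    by (simp add: card rank_dim_range)
qed

lemma universal_adj_matrix_entry:
  "universal_adj_matrix E \<alpha> \<beta> \<gamma> \<delta> $ a $ b =
     \<alpha> * (if E a b then 1 else 0) + \<beta> * (if a = b then 1 else 0) + \<gamma> +
     \<delta> * (if a = b then real (degree E a) else 0)"
  by (simp add: universal_adj_matrix_def adj_matrix_def deg_matrix_def all_ones_def mat_def)

lemma rank_universal_adj_matrix_ge_induced_path:
  fixes E :: "'n::finite \<Rightarrow> 'n \<Rightarrow> bool"
  assumes "has_induced_path E k" and "\<alpha> \<noteq> 0"
  shows "k - 2 \<le> rank (universal_adj_matrix E \<alpha> \<beta> \<gamma> \<delta>)"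
proof -
  let ?M = "universal_adj_matrix E \<alpha> \<beta> \<gamma> \<delta>"
  obtain f :: "nat \<Rightarrow> 'n" where inj: "inj_on f {0..<k}"
    and adj: "\<And>i j. i < k \<Longrightarrow> j < k \<Longrightarrow> E (f i) (f j) \<longleftrightarrow> i + 1 = j \<or> j + 1 = i"
    using assms(1) unfolding has_induced_path_def by blast
  have distinct: "f i \<noteq> f j" if "i < k" "j < k" "i \<noteq> j" for i j
    using inj that by (auto dest: inj_onD)
  define w where "w i = ?M *v (axis (f i) 1 - axis (f (i + 1)) 1)" for i
  have w_entry: "w i $ a = ?M $ a $ f i - ?M $ a $ f (i + 1)" for i a
    by (simp add: w_def matrix_vector_mult_diff_distrib matrix_vector_mult_basis column_def)
  show ?thesis
  proof (rule rank_ge_triangular_family[where w = w and g = "\<lambda>j. f (j + 2)"])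
    fix i assume "i < k - 2"
    then have "w i $ f (i + 2) = - \<alpha>"
      using adj[of "i + 2" i] adj[of "i + 2" "i + 1"]
        distinct[of "i + 2" i] distinct[of "i + 2" "i + 1"]
      by (simp add: w_entry universal_adj_matrix_entry)
    then show "w i $ f (i + 2) \<noteq> 0"
      using assms(2) by simp
  next
    fix i j assume "i < j" "j < k - 2"
    then show "w i $ f (j + 2) = 0"
      using adj[of "j + 2" i] adj[of "j + 2" "i + 1"]
        distinct[of "j + 2" i] distinct[of "j + 2" "i + 1"]
      by (simp add: w_entry universal_adj_matrix_entry)
  qed (auto simp: w_def)
qed

theorem lemma6:
  fixes E :: "'n::finite \<Rightarrow> 'n \<Rightarrow> bool" and k :: nat
  assumes "simple_graph E"
    and "k \<ge> 3"
    and "has_induced_path E k"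
  shows "mur E \<ge> k - 2"
proof -
  let ?ranks = "{rank (universal_adj_matrix E \<alpha> \<beta> \<gamma> \<delta>) | \<alpha> \<beta> \<gamma> \<delta>. \<alpha> \<noteq> 0}"
  have "rank (universal_adj_matrix E 1 0 0 0) \<in> ?ranks"
    by fastforce
  then have "?ranks \<noteq> {}"
    by blast
  moreover have "k - 2 \<le> r" if "r \<in> ?ranks" for r
    using that rank_universal_adj_matrix_ge_induced_path[OF assms(3)] by auto
  ultimately show ?thesis
    unfolding mur_def by (rule cInf_greatest)
qed

end
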